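(* Let $K$ be a simplicial complex on $[m]$. The quotient map $\varrho\colon\Lambda[u_1,\ldots,u_m]\otimes\mathbb Z[K]\to R^*(K)$ induces an isomorphism in cohomology.
   Context: $\mathbb Z[K]=\mathbb Z[v_1,\dots,v_m]/\mathcal I_K$, with $\mathcal I_K$ generated by monomials $v_{i_1}\cdots v_{i_k}$, $\{i_1,\dots,i_k\}\notin K$. The Koszul algebra $\Lambda[u_1,\ldots,u_m]\otimes\mathbb Z[K]$ is the differential bigraded algebra with $\operatorname{bideg}u_i=(-1,2)$, $\operatorname{bideg}v_i=(0,2)$, $du_i=v_i$, $dv_i=0$, $d$ a derivation. $R^*(K)$ is the quotient differential bigraded algebra $\Lambda[u_1,\ldots,u_m]\otimes\mathbb Z[K]/(v_i^2=u_iv_i=0,\ i=1,\dots,m)$ (the ideal generated by the $v_i^2$ and $u_iv_i$ is $d$-stable), with the induced differential and bigrading. *)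

theory Defs
  imports Main
begin

text \<open>A simplicial complex on [m] = {1..m}: a nonempty family of subsets of [m]
  closed under taking subsets (ghost vertices allowed).\<close>
definition simplicial_complex_on :: "nat \<Rightarrow> nat set set \<Rightarrow> bool" where
  "simplicial_complex_on m K \<longleftrightarrow>
     K \<noteq> {} \<and> (\<forall>\<sigma>\<in>K. \<sigma> \<subseteq> {1..m}) \<and> (\<forall>\<sigma>\<in>K. \<forall>\<tau>. \<tau> \<subseteq> \<sigma> \<longrightarrow> \<tau> \<in> K)"

text \<open>Elements of a free abelian group on a basis set are integer-valued functions on the
  basis with finite support contained in the basis set.\<close>
definition free_on :: "'b set \<Rightarrow> ('b \<Rightarrow> int) set" where
  "free_on B = {c. finite {b. c b \<noteq> 0} \<and> {b. c b \<noteq> 0} \<subseteq> B}"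

definition lin_ext :: "('b \<Rightarrow> ('b \<Rightarrow> int)) \<Rightarrow> ('b \<Rightarrow> int) \<Rightarrow> ('b \<Rightarrow> int)" where
  "lin_ext f c = (\<lambda>b'. \<Sum>b\<in>{b. c b \<noteq> 0}. c b * f b b')"

text \<open>Cohomology H(C,d) = ker d / im d, as the set of cosets z + im d of cycles z.\<close>
definition coset_of :: "('b \<Rightarrow> int) \<Rightarrow> ('b \<Rightarrow> int) set \<Rightarrow> ('b \<Rightarrow> int) set" where
  "coset_of z S = (\<lambda>s. (\<lambda>b. z b + s b)) ` S"

definition cohomology ::
  "('b \<Rightarrow> int) set \<Rightarrow> (('b \<Rightarrow> int) \<Rightarrow> ('b \<Rightarrow> int)) \<Rightarrow> ('b \<Rightarrow> int) set set" where
  "cohomology C d = (\<lambda>z. coset_of z (d ` C)) ` {z \<in> C. d z = (\<lambda>_. 0)}"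

definition induced_map ::
  "('b \<Rightarrow> int) set \<Rightarrow> (('b \<Rightarrow> int) \<Rightarrow> ('b \<Rightarrow> int)) \<Rightarrow> (('b \<Rightarrow> int) \<Rightarrow> ('b \<Rightarrow> int))
   \<Rightarrow> ('b \<Rightarrow> int) set \<Rightarrow> ('b \<Rightarrow> int) set" where
  "induced_map C' d' f cl = coset_of (f (SOME z. z \<in> cl)) (d' ` C')"

text \<open>f is a cochain map from (C,d) to (C',d') and the induced map H(C) \<rightarrow> H(C') is
  bijective (it is additive, so this is an isomorphism of groups).\<close>
definition induces_iso_in_cohomology ::
  "('b \<Rightarrow> int) set \<Rightarrow> (('b \<Rightarrow> int) \<Rightarrow> ('b \<Rightarrow> int)) \<Rightarrow>
   ('b \<Rightarrow> int) set \<Rightarrow> (('b \<Rightarrow> int) \<Rightarrow> ('b \<Rightarrow> int)) \<Rightarrow> (('b \<Rightarrow> int) \<Rightarrow> ('b \<Rightarrow> int)) \<Rightarrow> bool" where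
  "induces_iso_in_cohomology C d C' d' f \<longleftrightarrow>
     (\<forall>c\<in>C. f c \<in> C') \<and> (\<forall>c\<in>C. f (d c) = d' (f c)) \<and>
     bij_betw (induced_map C' d' f) (cohomology C d) (cohomology C' d')"

text \<open>Basis monomials u_J v^\<alpha> (J \<subseteq> [m], exterior part; \<alpha> exponents of the v_i).
  Z[K] is free abelian on the monomials v^\<alpha> not in the monomial ideal I_K, i.e. those
  whose support is a face of K.\<close>
type_synonym kmonomial = "nat set \<times> (nat \<Rightarrow> nat)"

definition supp_exp :: "(nat \<Rightarrow> nat) \<Rightarrow> nat set" where
  "supp_exp \<alpha> = {i. \<alpha> i \<noteq> 0}"

definition koszul_basis :: "nat \<Rightarrow> nat set set \<Rightarrow> kmonomial set" where
  "koszul_basis m K = {(J, \<alpha>). J \<subseteq> {1..m} \<and> supp_exp \<alpha> \<in> K}"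

text \<open>Sign of removing u_j from u_J = u_j1 ... u_jk in increasing order.\<close>
definition koszul_sign :: "nat \<Rightarrow> nat set \<Rightarrow> int" where
  "koszul_sign j J = (-1) ^ card {i \<in> J. i < j}"

text \<open>d(u_J v^a) = sum over j in J of (sign) u_(J-j) v^(a+e_j); terms outside Z[K] are zero.\<close>
definition koszul_d_basis :: "nat \<Rightarrow> nat set set \<Rightarrow> kmonomial \<Rightarrow> kmonomial \<Rightarrow> int" where
  "koszul_d_basis m K b b' =
     (case b of (J, \<alpha>) \<Rightarrow>
       (if b' \<in> koszul_basis m K then
          (\<Sum>j\<in>J. if b' = (J - {j}, \<alpha>(j := Suc (\<alpha> j))) then koszul_sign j J else 0)
        else 0))"

definition koszul_complex :: "nat \<Rightarrow> nat set set \<Rightarrow> (kmonomial \<Rightarrow> int) set" where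
  "koszul_complex m K = free_on (koszul_basis m K)"

definition koszul_d :: "nat \<Rightarrow> nat set set \<Rightarrow> (kmonomial \<Rightarrow> int) \<Rightarrow> (kmonomial \<Rightarrow> int)" where
  "koszul_d m K = lin_ext (koszul_d_basis m K)"

text \<open>The ideal generated by v_i^2 and u_i v_i is the span of the basis monomials divisible by
  some v_i^2 or some u_i v_i; the quotient is free on the remaining basis monomials
  u_J v_I with I \<in> K square-free and I \<inter> J = {}.\<close>
definition in_R_ideal :: "kmonomial \<Rightarrow> bool" where
  "in_R_ideal b = (case b of (J, \<alpha>) \<Rightarrow> (\<exists>i. 2 \<le> \<alpha> i) \<or> (\<exists>i\<in>J. 1 \<le> \<alpha> i))"

definition R_basis :: "nat \<Rightarrow> nat set set \<Rightarrow> kmonomial set" where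
  "R_basis m K = {b \<in> koszul_basis m K. \<not> in_R_ideal b}"

definition R_complex :: "nat \<Rightarrow> nat set set \<Rightarrow> (kmonomial \<Rightarrow> int) set" where
  "R_complex m K = free_on (R_basis m K)"

text \<open>The quotient map \<rho> (identifying R^*(K) with the span of R_basis).\<close>
definition rho :: "nat \<Rightarrow> nat set set \<Rightarrow> (kmonomial \<Rightarrow> int) \<Rightarrow> (kmonomial \<Rightarrow> int)" where
  "rho m K c = (\<lambda>b. if b \<in> R_basis m K then c b else 0)"

definition R_d :: "nat \<Rightarrow> nat set set \<Rightarrow> (kmonomial \<Rightarrow> int) \<Rightarrow> (kmonomial \<Rightarrow> int)" where
  "R_d m K c = rho m K (koszul_d m K c)"

end

theory Submission
  imports Defs
begin

(*
  The differential of the Koszul algebra preserves the multidegree, in which u_i and v_i both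
  count in degree i, and R^*(K) is spanned by the basis monomials u_J v^alpha whose multidegree
  is at most 1 in every index. So the Koszul algebra is the direct sum of the subcomplex R^*(K)
  and the subcomplex N spanned by the remaining monomials, and rho is the projection; it is a
  quasi-isomorphism as soon as N is acyclic.

  For a monomial of N let i be the least index of multidegree >= 2. The contraction replaces one
  v_i by u_i if u_i does not occur and is zero otherwise; in the i-th tensor factor this is the
  contraction of the acyclic complex u_i v_i^(k-1) -> v_i^k (k >= 2), and since such moves do not
  change the set of indices occurring in the v-part, the truncation by the Stanley-Reisner ideal
  does not interfere with it.
*)

section \<open>Finitely supported integer functions\<close>

definition supp :: "('b \<Rightarrow> int) \<Rightarrow> 'b set" where
  "supp c = {b. c b \<noteq> 0}"

definition delta :: "'b \<Rightarrow> 'b \<Rightarrow> int" where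
  "delta b = (\<lambda>x. if x = b then 1 else 0)"

definition proj_on :: "'b set \<Rightarrow> ('b \<Rightarrow> int) \<Rightarrow> 'b \<Rightarrow> int" where
  "proj_on B c = (\<lambda>b. if b \<in> B then c b else 0)"

lemma free_on_iff: "c \<in> free_on B \<longleftrightarrow> finite (supp c) \<and> supp c \<subseteq> B"
  by (simp add: free_on_def supp_def)

lemma free_on_zero: "(\<lambda>_. 0) \<in> free_on B"
  by (simp add: free_on_iff supp_def)

lemma free_on_add:
  assumes "c1 \<in> free_on B" "c2 \<in> free_on B"
  shows "(\<lambda>x. c1 x + c2 x) \<in> free_on B"
proof -
  have "supp (\<lambda>x. c1 x + c2 x) \<subseteq> supp c1 \<union> supp c2" by (auto simp: supp_def)
  then show ?thesis using assms by (auto simp: free_on_iff elim: finite_subset)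
qed

lemma free_on_diff:
  assumes "c1 \<in> free_on B" "c2 \<in> free_on B"
  shows "(\<lambda>x. c1 x - c2 x) \<in> free_on B"
proof -
  have "supp (\<lambda>x. c1 x - c2 x) \<subseteq> supp c1 \<union> supp c2" by (auto simp: supp_def)
  then show ?thesis using assms by (auto simp: free_on_iff elim: finite_subset)
qed

lemma free_on_mono: "B \<subseteq> B' \<Longrightarrow> c \<in> free_on B \<Longrightarrow> c \<in> free_on B'"
  by (auto simp: free_on_iff)

lemma proj_on_in_free_on: "c \<in> free_on B \<Longrightarrow> proj_on B' c \<in> free_on (B \<inter> B')"
  unfolding free_on_iff supp_def proj_on_def by (auto elim: rev_finite_subset)

lemma proj_on_free_on: "c \<in> free_on B \<Longrightarrow> proj_on B c = c"
  by (fastforce simp: free_on_iff supp_def proj_on_def)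

lemma proj_on_idem: "proj_on B (proj_on B c) = proj_on B c"
  by (simp add: proj_on_def fun_eq_iff)

lemma lin_ext_eq_sum:
  assumes "finite S" "supp c \<subseteq> S"
  shows "lin_ext f c z = (\<Sum>b\<in>S. c b * f b z)"
  unfolding lin_ext_def
  by (rule sum.mono_neutral_left) (use assms in \<open>auto simp: supp_def\<close>)

lemma lin_ext_zero: "lin_ext f (\<lambda>_. 0) = (\<lambda>_. 0)"
  by (simp add: lin_ext_def)

lemma lin_ext_cong: "(\<And>b. b \<in> supp c \<Longrightarrow> f b = g b) \<Longrightarrow> lin_ext f c = lin_ext g c"
  by (auto simp: lin_ext_def supp_def intro!: sum.cong)

lemma lin_ext_add_fun: "lin_ext (\<lambda>b x. f b x + g b x) c = (\<lambda>x. lin_ext f c x + lin_ext g c x)"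
  by (simp add: lin_ext_def distrib_left sum.distrib)

lemma lin_ext_delta: "finite (supp c) \<Longrightarrow> lin_ext delta c = c"
  by (auto simp: lin_ext_def supp_def delta_def if_distrib cong: if_cong)

lemma lin_ext_add:
  assumes "finite (supp c1)" "finite (supp c2)"
  shows "lin_ext f (\<lambda>x. c1 x + c2 x) = (\<lambda>z. lin_ext f c1 z + lin_ext f c2 z)"
proof
  fix z
  let ?S = "supp c1 \<union> supp c2"
  have "\<And>c. supp c \<subseteq> ?S \<Longrightarrow> lin_ext f c z = (\<Sum>b\<in>?S. c b * f b z)"
    by (rule lin_ext_eq_sum) (use assms in auto)
  moreover have "supp (\<lambda>x. c1 x + c2 x) \<subseteq> ?S"
    by (auto simp: supp_def)
  ultimately show "lin_ext f (\<lambda>x. c1 x + c2 x) z = lin_ext f c1 z + lin_ext f c2 z"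
    by (simp add: distrib_right sum.distrib)
qed

lemma lin_ext_diff:
  assumes "finite (supp c1)" "finite (supp c2)"
  shows "lin_ext f (\<lambda>x. c1 x - c2 x) = (\<lambda>z. lin_ext f c1 z - lin_ext f c2 z)"
proof
  fix z
  let ?S = "supp c1 \<union> supp c2"
  have "\<And>c. supp c \<subseteq> ?S \<Longrightarrow> lin_ext f c z = (\<Sum>b\<in>?S. c b * f b z)"
    by (rule lin_ext_eq_sum) (use assms in auto)
  moreover have "supp (\<lambda>x. c1 x - c2 x) \<subseteq> ?S"
    by (auto simp: supp_def)
  ultimately show "lin_ext f (\<lambda>x. c1 x - c2 x) z = lin_ext f c1 z - lin_ext f c2 z"
    by (simp add: left_diff_distrib sum_subtractf)
qed

lemma supp_lin_ext: "supp (lin_ext f c) \<subseteq> (\<Union>b\<in>supp c. supp (f b))"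
proof
  fix x assume "x \<in> supp (lin_ext f c)"
  then obtain b where "b \<in> supp c" "c b * f b x \<noteq> 0"
    unfolding supp_def lin_ext_def using sum.not_neutral_contains_not_neutral by blast
  then show "x \<in> (\<Union>b\<in>supp c. supp (f b))" by (auto simp: supp_def)
qed

lemma lin_ext_in_free_on:
  assumes "c \<in> free_on B" "\<And>b. b \<in> B \<Longrightarrow> f b \<in> free_on B'"
  shows "lin_ext f c \<in> free_on B'"
  using supp_lin_ext[of f c] assms by (fastforce simp: free_on_iff elim!: finite_subset)

lemma lin_ext_scaled_delta: "lin_ext f (\<lambda>x. a * delta y x) = (\<lambda>z. a * f y z)"
  by (rule ext, subst lin_ext_eq_sum[where S = "{y}"]) (auto simp: supp_def delta_def)

lemma lin_ext_sum_delta: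
  assumes "finite S"
  shows "lin_ext f (\<lambda>x. \<Sum>j\<in>S. a j * delta (g j) x) = (\<lambda>z. \<Sum>j\<in>S. a j * f (g j) z)"
proof
  fix z
  have "supp (\<lambda>x. \<Sum>j\<in>S. a j * delta (g j) x) \<subseteq> g ` S"
    by (force simp: supp_def delta_def intro: sum.neutral)
  then have "lin_ext f (\<lambda>x. \<Sum>j\<in>S. a j * delta (g j) x) z
      = (\<Sum>b\<in>g ` S. (\<Sum>j\<in>S. a j * delta (g j) b) * f b z)"
    using assms by (intro lin_ext_eq_sum) auto
  also have "\<dots> = (\<Sum>j\<in>S. a j * (\<Sum>b\<in>g ` S. delta (g j) b * f b z))"
    by (simp add: sum_distrib_left sum_distrib_right sum.swap[of _ S] mult.assoc)
  also have "\<dots> = (\<Sum>j\<in>S. a j * f (g j) z)"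
    using assms by (simp add: delta_def if_distrib[of "\<lambda>t. t * _"] sum.delta' cong: if_cong)
  finally show "lin_ext f (\<lambda>x. \<Sum>j\<in>S. a j * delta (g j) x) z = (\<Sum>j\<in>S. a j * f (g j) z)" .
qed

lemma lin_ext_lin_ext:
  assumes "finite (supp c)" "\<And>b. b \<in> supp c \<Longrightarrow> finite (supp (g b))"
  shows "lin_ext f (lin_ext g c) = lin_ext (\<lambda>b. lin_ext f (g b)) c"
proof
  fix z
  define T where "T = (\<Union>b\<in>supp c. supp (g b))"
  have T: "finite T" using assms by (simp add: T_def)
  have "lin_ext f (lin_ext g c) z = (\<Sum>x\<in>T. lin_ext g c x * f x z)"
    using T supp_lin_ext[of g c] by (intro lin_ext_eq_sum) (auto simp: T_def)
  also have "\<dots> = (\<Sum>x\<in>T. \<Sum>b\<in>supp c. c b * g b x * f x z)"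
    by (simp add: lin_ext_def supp_def sum_distrib_right)
  also have "\<dots> = (\<Sum>b\<in>supp c. c b * (\<Sum>x\<in>T. g b x * f x z))"
    by (subst sum.swap) (simp add: sum_distrib_left mult.assoc)
  also have "\<dots> = (\<Sum>b\<in>supp c. c b * lin_ext f (g b) z)"
    using T by (intro sum.cong refl arg_cong[where f = "(*) _"] lin_ext_eq_sum[symmetric])
      (auto simp: T_def)
  also have "\<dots> = lin_ext (\<lambda>b. lin_ext f (g b)) c z"
    by (simp add: lin_ext_def supp_def)
  finally show "lin_ext f (lin_ext g c) z = lin_ext (\<lambda>b. lin_ext f (g b)) c z" .
qed

section \<open>Projection onto a subcomplex spanned by part of a basis\<close>

lemma coset_of_self: "(\<lambda>_. 0) \<in> S \<Longrightarrow> x \<in> coset_of x S"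
  unfolding coset_of_def by (erule rev_image_eqI) simp

lemma coset_of_eq_iff:
  assumes zero: "(\<lambda>_. 0) \<in> S" and diff: "\<And>s t. s \<in> S \<Longrightarrow> t \<in> S \<Longrightarrow> (\<lambda>b. s b - t b) \<in> S"
  shows "coset_of x S = coset_of y S \<longleftrightarrow> (\<lambda>b. x b - y b) \<in> S"
proof
  assume "coset_of x S = coset_of y S"
  moreover have "x \<in> coset_of x S" using zero by (rule coset_of_self)
  ultimately obtain s where "s \<in> S" "x = (\<lambda>b. y b + s b)"
    unfolding coset_of_def by auto
  then show "(\<lambda>b. x b - y b) \<in> S" by simp
next
  have neg: "(\<lambda>b. - s b) \<in> S" if "s \<in> S" for s
    using diff[OF zero that] by simp
  have add: "(\<lambda>b. s b + t b) \<in> S" if "s \<in> S" "t \<in> S" for s t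
    using diff[OF that(1) neg[OF that(2)]] by simp
  have le: "coset_of x S \<subseteq> coset_of y S" if xy: "(\<lambda>b. x b - y b) \<in> S" for x y
  proof
    fix w assume "w \<in> coset_of x S"
    then obtain s where s: "s \<in> S" "w = (\<lambda>b. x b + s b)"
      unfolding coset_of_def by auto
    from add[OF xy s(1)] show "w \<in> coset_of y S"
      unfolding coset_of_def by (rule rev_image_eqI) (simp add: s(2))
  qed
  assume "(\<lambda>b. x b - y b) \<in> S"
  moreover from neg[OF this] have "(\<lambda>b. y b - x b) \<in> S" by simp
  ultimately show "coset_of x S = coset_of y S" using le by (intro equalityI)
qed

lemma lin_ext_contracting_homotopy:
  assumes n: "n \<in> free_on N" and cycle: "lin_ext f n = (\<lambda>_. 0)"
    and finite: "\<And>b. b \<in> N \<Longrightarrow> finite (supp (h b)) \<and> finite (supp (f b))"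
    and homotopy: "\<And>b. b \<in> N \<Longrightarrow> (\<lambda>x. lin_ext f (h b) x + lin_ext h (f b) x) = delta b"
  shows "lin_ext f (lin_ext h n) = n"
proof -
  have supp_n: "finite (supp n)" "supp n \<subseteq> N" using n by (auto simp: free_on_iff)
  have "lin_ext (\<lambda>b. lin_ext h (f b)) n = lin_ext h (lin_ext f n)"
    using supp_n finite by (intro lin_ext_lin_ext[symmetric]) auto
  also have "\<dots> = (\<lambda>_. 0)" by (simp add: cycle lin_ext_zero)
  finally have "lin_ext (\<lambda>b. lin_ext h (f b)) n = (\<lambda>_. 0)" .
  moreover have "n = lin_ext (\<lambda>b x. lin_ext f (h b) x + lin_ext h (f b) x) n"
    using supp_n by (subst lin_ext_cong[where g = delta]) (auto simp: homotopy lin_ext_delta)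
  moreover have "lin_ext f (lin_ext h n) = lin_ext (\<lambda>b. lin_ext f (h b)) n"
    using supp_n finite by (intro lin_ext_lin_ext) auto
  ultimately show ?thesis by (simp add: lin_ext_add_fun)
qed

locale split_based_complex =
  fixes B B' :: "'b set" and f :: "'b \<Rightarrow> 'b \<Rightarrow> int"
  assumes subset: "B' \<subseteq> B"
    and f_in_free_on: "\<And>b. b \<in> B \<Longrightarrow> f b \<in> free_on B"
    and f_respects_split: "\<And>b x. b \<in> B \<Longrightarrow> f b x \<noteq> 0 \<Longrightarrow> x \<in> B' \<longleftrightarrow> b \<in> B'"
begin

abbreviation "C \<equiv> free_on B"
abbreviation "R \<equiv> free_on B'"
abbreviation "d \<equiv> lin_ext f"
abbreviation "p \<equiv> proj_on B'"

lemma R_subset_C: "r \<in> R \<Longrightarrow> r \<in> C"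
  using subset by (rule free_on_mono)

lemma p_in_R: "c \<in> C \<Longrightarrow> p c \<in> R"
  using proj_on_in_free_on free_on_mono by blast

lemma d_add: "c1 \<in> C \<Longrightarrow> c2 \<in> C \<Longrightarrow> d (\<lambda>x. c1 x + c2 x) = (\<lambda>x. d c1 x + d c2 x)"
  by (rule lin_ext_add) (auto simp: free_on_iff)

lemma d_diff: "c1 \<in> C \<Longrightarrow> c2 \<in> C \<Longrightarrow> d (\<lambda>x. c1 x - c2 x) = (\<lambda>x. d c1 x - d c2 x)"
  by (rule lin_ext_diff) (auto simp: free_on_iff)

lemma d_p_commute:
  assumes "c \<in> C"
  shows "d (p c) = p (d c)"
proof
  fix z
  have c: "finite (supp c)" "supp c \<subseteq> B" using assms by (auto simp: free_on_iff)
  have "d (p c) z = (\<Sum>b\<in>supp c. p c b * f b z)"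
    using c by (intro lin_ext_eq_sum) (auto simp: supp_def proj_on_def)
  also have "\<dots> = (\<Sum>b\<in>supp c. if z \<in> B' then c b * f b z else 0)"
    using c f_respects_split by (intro sum.cong refl) (auto simp: proj_on_def)
  also have "\<dots> = p (d c) z"
    by (simp add: proj_on_def lin_ext_def supp_def)
  finally show "d (p c) z = p (d c) z" .
qed

lemma p_d_on_R: "r \<in> R \<Longrightarrow> p (d r) = d r"
  using d_p_commute R_subset_C proj_on_free_on by metis

lemma zero_in_boundaries: "(\<lambda>_. 0) \<in> A \<Longrightarrow> (\<lambda>_. 0) \<in> d ` A"
  by (erule rev_image_eqI) (simp add: lin_ext_zero)

lemma boundaries_diff:
  assumes "A \<subseteq> C" "\<And>a1 a2. a1 \<in> A \<Longrightarrow> a2 \<in> A \<Longrightarrow> (\<lambda>x. a1 x - a2 x) \<in> A"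
    and "s \<in> d ` A" "t \<in> d ` A"
  shows "(\<lambda>x. s x - t x) \<in> d ` A"
proof -
  obtain a1 a2 where "a1 \<in> A" "a2 \<in> A" "s = d a1" "t = d a2" using assms(3,4) by blast
  with assms(1,2) show ?thesis by (auto simp: d_diff[symmetric] subset_iff)
qed

lemma coset_of_boundaries_C_eq_iff:
  "coset_of x (d ` C) = coset_of y (d ` C) \<longleftrightarrow> (\<lambda>b. x b - y b) \<in> d ` C"
  by (intro coset_of_eq_iff zero_in_boundaries boundaries_diff free_on_zero free_on_diff) auto

lemma coset_of_boundaries_R_eq_iff:
  "coset_of x (d ` R) = coset_of y (d ` R) \<longleftrightarrow> (\<lambda>b. x b - y b) \<in> d ` R"
  by (intro coset_of_eq_iff zero_in_boundaries boundaries_diff free_on_zero free_on_diff)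
    (auto intro: R_subset_C)

lemma induced_map_coset:
  assumes "z \<in> C"
  shows "induced_map R (\<lambda>c. p (d c)) p (coset_of z (d ` C)) = coset_of (p z) (d ` R)"
proof -
  have boundaries_R: "(\<lambda>c. p (d c)) ` R = d ` R"
    using p_d_on_R by (auto simp: image_def)
  have "z \<in> coset_of z (d ` C)"
    by (intro coset_of_self zero_in_boundaries free_on_zero)
  then have "(SOME w. w \<in> coset_of z (d ` C)) \<in> coset_of z (d ` C)"
    by (rule someI[where P = "\<lambda>w. w \<in> coset_of z (d ` C)"])
  then obtain y where y: "y \<in> C" "(SOME w. w \<in> coset_of z (d ` C)) = (\<lambda>b. z b + d y b)"
    unfolding coset_of_def by auto
  have "(\<lambda>b. p (\<lambda>b. z b + d y b) b - p z b) = d (p y)"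
    using d_p_commute[OF y(1)] by (auto simp: proj_on_def)
  then have "coset_of (p (\<lambda>b. z b + d y b)) (d ` R) = coset_of (p z) (d ` R)"
    using p_in_R[OF y(1)] by (subst coset_of_boundaries_R_eq_iff) auto
  then show ?thesis unfolding induced_map_def boundaries_R y(2) .
qed

lemma boundary_of_proj_boundary:
  assumes acyclic: "\<And>n. n \<in> free_on (B - B') \<Longrightarrow> d n = (\<lambda>_. 0) \<Longrightarrow> n \<in> d ` C"
    and z: "z \<in> C" "d z = (\<lambda>_. 0)" and pz: "p z \<in> d ` R"
  shows "z \<in> d ` C"
proof -
  obtain r where r: "r \<in> R" "p z = d r" using pz by blast
  define n where "n = (\<lambda>b. z b - p z b)"
  have "supp n \<subseteq> supp z - B'" by (auto simp: n_def supp_def proj_on_def)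
  then have "n \<in> free_on (B - B')"
    using z(1) by (auto simp: free_on_iff elim: finite_subset)
  moreover have "d n = (\<lambda>_. 0)"
    using d_diff[OF z(1) R_subset_C[OF p_in_R[OF z(1)]]] d_p_commute[OF z(1)] z(2)
    by (simp add: n_def proj_on_def)
  ultimately obtain y where y: "y \<in> C" "n = d y" using acyclic by blast
  have "z = (\<lambda>b. n b + p z b)" by (simp add: n_def)
  also have "\<dots> = (\<lambda>b. d y b + d r b)" using y(2) r(2) by simp
  also have "\<dots> = d (\<lambda>b. y b + r b)" using d_add[OF y(1) R_subset_C[OF r(1)]] by simp
  finally show ?thesis using free_on_add[OF y(1) R_subset_C[OF r(1)]] by blast
qed

theorem proj_induces_iso_in_cohomology:
  assumes acyclic: "\<And>n. n \<in> free_on (B - B') \<Longrightarrow> d n = (\<lambda>_. 0) \<Longrightarrow> n \<in> d ` C"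
  shows "induces_iso_in_cohomology C d R (\<lambda>c. p (d c)) p"
proof -
  let ?F = "induced_map R (\<lambda>c. p (d c)) p"
  have HC: "cohomology C d = (\<lambda>z. coset_of z (d ` C)) ` {z \<in> C. d z = (\<lambda>_. 0)}"
    by (simp add: cohomology_def)
  have "(\<lambda>c. p (d c)) ` R = d ` R" "{z \<in> R. p (d z) = (\<lambda>_. 0)} = {z \<in> R. d z = (\<lambda>_. 0)}"
    using p_d_on_R by (auto simp: image_def proj_on_def)
  then have HR: "cohomology R (\<lambda>c. p (d c)) = (\<lambda>z. coset_of z (d ` R)) ` {z \<in> R. d z = (\<lambda>_. 0)}"
    by (simp add: cohomology_def)
  have "inj_on ?F (cohomology C d)"
  proof (rule inj_onI)
    fix c1 c2 assume "c1 \<in> cohomology C d" "c2 \<in> cohomology C d" and "?F c1 = ?F c2"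
    then obtain z1 z2 where z: "z1 \<in> C" "d z1 = (\<lambda>_. 0)" "c1 = coset_of z1 (d ` C)"
        "z2 \<in> C" "d z2 = (\<lambda>_. 0)" "c2 = coset_of z2 (d ` C)"
        "coset_of (p z1) (d ` R) = coset_of (p z2) (d ` R)"
      unfolding HC by (auto simp: induced_map_coset)
    then have "p (\<lambda>b. z1 b - z2 b) \<in> d ` R"
      by (simp add: coset_of_boundaries_R_eq_iff proj_on_def if_distrib[of "\<lambda>t. t - _"] cong: if_cong)
    moreover have "d (\<lambda>b. z1 b - z2 b) = (\<lambda>_. 0)" using z by (simp add: d_diff)
    ultimately have "(\<lambda>b. z1 b - z2 b) \<in> d ` C"
      using boundary_of_proj_boundary[OF acyclic] free_on_diff z by blast
    then show "c1 = c2" using z by (simp add: coset_of_boundaries_C_eq_iff)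
  qed
  moreover have "?F ` cohomology C d = cohomology R (\<lambda>c. p (d c))"
  proof
    show "?F ` cohomology C d \<subseteq> cohomology R (\<lambda>c. p (d c))"
    proof
      fix x assume "x \<in> ?F ` cohomology C d"
      then obtain z where z: "z \<in> C" "d z = (\<lambda>_. 0)" "x = coset_of (p z) (d ` R)"
        unfolding HC by (auto simp: induced_map_coset)
      moreover have "d (p z) = (\<lambda>_. 0)" using d_p_commute[OF z(1)] z(2) by (simp add: proj_on_def)
      ultimately show "x \<in> cohomology R (\<lambda>c. p (d c))" unfolding HR using p_in_R by blast
    qed
    show "cohomology R (\<lambda>c. p (d c)) \<subseteq> ?F ` cohomology C d"
    proof
      fix x assume "x \<in> cohomology R (\<lambda>c. p (d c))"
      then obtain r where r: "r \<in> R" "d r = (\<lambda>_. 0)" "x = coset_of r (d ` R)"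
        unfolding HR by blast
      then have "x = ?F (coset_of r (d ` C))"
        by (simp add: induced_map_coset R_subset_C proj_on_free_on)
      then show "x \<in> ?F ` cohomology C d" unfolding HC using r R_subset_C by blast
    qed
  qed
  moreover have "p (d c) = p (d (p c))" if "c \<in> C" for c
    using d_p_commute[OF that] proj_on_idem by metis
  ultimately show ?thesis
    unfolding induces_iso_in_cohomology_def bij_betw_def using p_in_R by blast
qed

end

section \<open>The multigrading of the Koszul algebra\<close>

definition multideg :: "kmonomial \<Rightarrow> nat \<Rightarrow> nat" where
  "multideg b i = (if i \<in> fst b then 1 else 0) + snd b i"

definition u_to_v :: "nat \<Rightarrow> kmonomial \<Rightarrow> kmonomial" where
  "u_to_v j b = (fst b - {j}, (snd b)(j := Suc (snd b j)))"

definition v_to_u :: "nat \<Rightarrow> kmonomial \<Rightarrow> kmonomial" where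
  "v_to_u i b = (insert i (fst b), (snd b)(i := snd b i - 1))"

lemma fst_u_to_v [simp]: "fst (u_to_v j b) = fst b - {j}"
  by (simp add: u_to_v_def)

lemma fst_v_to_u [simp]: "fst (v_to_u i b) = insert i (fst b)"
  by (simp add: v_to_u_def)

lemma in_R_ideal_iff_multideg: "in_R_ideal b \<longleftrightarrow> (\<exists>i. 2 \<le> multideg b i)"
proof -
  have "2 \<le> multideg b i \<longleftrightarrow> 2 \<le> snd b i \<or> (i \<in> fst b \<and> 1 \<le> snd b i)" for i
    by (auto simp: multideg_def)
  then show ?thesis by (cases b) (auto simp: in_R_ideal_def)
qed

lemma multideg_u_to_v: "j \<in> fst b \<Longrightarrow> multideg (u_to_v j b) = multideg b"
  by (auto simp: multideg_def u_to_v_def)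

lemma u_to_v_v_to_u: "i \<noteq> j \<Longrightarrow> u_to_v j (v_to_u i b) = v_to_u i (u_to_v j b)"
  by (auto simp: u_to_v_def v_to_u_def fun_upd_twist)

lemma u_to_v_v_to_u_cancel: "i \<notin> fst b \<Longrightarrow> 1 \<le> snd b i \<Longrightarrow> u_to_v i (v_to_u i b) = b"
  by (cases b) (auto simp: u_to_v_def v_to_u_def)

lemma v_to_u_u_to_v_cancel: "i \<in> fst b \<Longrightarrow> v_to_u i (u_to_v i b) = b"
  by (cases b) (auto simp: u_to_v_def v_to_u_def insert_absorb)

lemma v_to_u_in_koszul_basis_iff:
  assumes "2 \<le> snd b i" "i \<in> {1..m}"
  shows "v_to_u i b \<in> koszul_basis m K \<longleftrightarrow> b \<in> koszul_basis m K"
proof -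
  have "supp_exp ((snd b)(i := snd b i - 1)) = supp_exp (snd b)"
    using assms(1) by (auto simp: supp_exp_def)
  then show ?thesis using assms(2) by (cases b) (auto simp: v_to_u_def koszul_basis_def)
qed

lemma koszul_d_basis_eq:
  "koszul_d_basis m K b = (\<lambda>x. \<Sum>j\<in>fst b.
     (if u_to_v j b \<in> koszul_basis m K then koszul_sign j (fst b) else 0) * delta (u_to_v j b) x)"
proof
  fix x
  show "koszul_d_basis m K b x = (\<Sum>j\<in>fst b.
     (if u_to_v j b \<in> koszul_basis m K then koszul_sign j (fst b) else 0) * delta (u_to_v j b) x)"
  proof (cases "x \<in> koszul_basis m K")
    case True
    then show ?thesis
      by (cases b) (auto simp: koszul_d_basis_def u_to_v_def delta_def intro!: sum.cong)
  next
    case False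
    then show ?thesis
      by (cases b) (auto simp: koszul_d_basis_def delta_def intro!: sum.neutral)
  qed
qed

lemma koszul_d_basis_nonzero:
  assumes "koszul_d_basis m K b x \<noteq> 0"
  shows "x \<in> koszul_basis m K" "\<exists>j\<in>fst b. x = u_to_v j b"
proof -
  from assms obtain j where "j \<in> fst b"
      "(if u_to_v j b \<in> koszul_basis m K then koszul_sign j (fst b) else 0) * delta (u_to_v j b) x \<noteq> 0"
    unfolding koszul_d_basis_eq by (meson sum.not_neutral_contains_not_neutral)
  then show "x \<in> koszul_basis m K" "\<exists>j\<in>fst b. x = u_to_v j b"
    by (auto simp: delta_def split: if_splits)
qed

lemma finite_koszul_basis_fst: "b \<in> koszul_basis m K \<Longrightarrow> finite (fst b)"
  by (auto simp: koszul_basis_def elim: finite_subset)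

lemma koszul_d_basis_in_free_on:
  assumes "b \<in> koszul_basis m K"
  shows "koszul_d_basis m K b \<in> free_on (koszul_basis m K)"
proof -
  have "finite (fst b)" using assms by (rule finite_koszul_basis_fst)
  moreover have "supp (koszul_d_basis m K b) \<subseteq> (\<lambda>j. u_to_v j b) ` fst b"
    using koszul_d_basis_nonzero(2) by (fastforce simp: supp_def)
  moreover have "supp (koszul_d_basis m K b) \<subseteq> koszul_basis m K"
    unfolding supp_def using koszul_d_basis_nonzero(1)[of m K b] by blast
  ultimately show ?thesis
    by (auto simp: free_on_iff elim: finite_surj)
qed

lemma koszul_split_based_complex:
  "split_based_complex (koszul_basis m K) (R_basis m K) (koszul_d_basis m K)"
proof
  show "R_basis m K \<subseteq> koszul_basis m K" by (auto simp: R_basis_def)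
  show "koszul_d_basis m K b \<in> free_on (koszul_basis m K)" if "b \<in> koszul_basis m K" for b
    using that by (rule koszul_d_basis_in_free_on)
  show "x \<in> R_basis m K \<longleftrightarrow> b \<in> R_basis m K"
    if "b \<in> koszul_basis m K" "koszul_d_basis m K b x \<noteq> 0" for b x
    using that koszul_d_basis_nonzero[OF that(2)]
    by (auto simp: R_basis_def in_R_ideal_iff_multideg multideg_u_to_v)
qed

section \<open>A contraction of the kernel of the projection\<close>

lemma card_less_insert:
  assumes "finite J" "i \<notin> J"
  shows "card {k \<in> insert i J. k < j} = card {k \<in> J. k < j} + (if i < j then 1 else 0)"
proof -
  have "{k \<in> insert i J. k < j} = (if i < j then insert i {k \<in> J. k < j} else {k \<in> J. k < j})"
    by auto
  then show ?thesis using assms by simp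
qed

lemma koszul_sign_sq: "koszul_sign j J * koszul_sign j J = 1"
  by (simp add: koszul_sign_def power_mult_distrib[symmetric])

lemma koszul_sign_exchange:
  assumes "finite J" "i \<notin> J" "j \<in> J"
  shows "koszul_sign i (insert i J) * koszul_sign j (insert i J)
    = - (koszul_sign j J * koszul_sign i (insert i (J - {j})))"
proof -
  have "i \<noteq> j" using assms by auto
  have "card {k \<in> J. k < i} = card {k \<in> J - {j}. k < i} + (if j < i then 1 else 0)"
    using card_less_insert[of "J - {j}" j i] assms by (simp add: insert_absorb)
  moreover have "{k \<in> insert i J. k < i} = {k \<in> J. k < i}"
    "{k \<in> insert i (J - {j}). k < i} = {k \<in> J - {j}. k < i}" by auto
  ultimately show ?thesis
    using card_less_insert[of J i j] assms \<open>i \<noteq> j\<close>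
    by (cases "i < j") (auto simp: koszul_sign_def power_add)
qed

definition pivot :: "kmonomial \<Rightarrow> nat" where
  "pivot b = (LEAST i. 2 \<le> multideg b i)"

definition koszul_contraction :: "kmonomial \<Rightarrow> kmonomial \<Rightarrow> int" where
  "koszul_contraction b =
     (if pivot b \<in> fst b then (\<lambda>_. 0)
      else (\<lambda>x. koszul_sign (pivot b) (insert (pivot b) (fst b)) * delta (v_to_u (pivot b) b) x))"

lemma multideg_pivot: "in_R_ideal b \<Longrightarrow> 2 \<le> multideg b (pivot b)"
  unfolding pivot_def in_R_ideal_iff_multideg by (rule LeastI_ex)

lemma pivot_u_to_v: "j \<in> fst b \<Longrightarrow> pivot (u_to_v j b) = pivot b"
  by (simp add: pivot_def multideg_u_to_v)

lemma pivot_in_vertices: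
  assumes "\<forall>\<sigma>\<in>K. \<sigma> \<subseteq> {1..m}" "b \<in> koszul_basis m K" "in_R_ideal b"
  shows "pivot b \<in> {1..m}"
proof -
  have "pivot b \<in> fst b \<or> pivot b \<in> supp_exp (snd b)"
    using multideg_pivot[OF assms(3)] by (auto simp: multideg_def supp_exp_def split: if_splits)
  moreover have "fst b \<subseteq> {1..m}" "supp_exp (snd b) \<in> K"
    using assms(2) by (auto simp: koszul_basis_def)
  ultimately show ?thesis using assms(1) by blast
qed

lemma koszul_contraction_in_free_on:
  assumes "\<forall>\<sigma>\<in>K. \<sigma> \<subseteq> {1..m}" "b \<in> koszul_basis m K" "in_R_ideal b"
  shows "koszul_contraction b \<in> free_on (koszul_basis m K)"
proof (cases "pivot b \<in> fst b")
  case True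
  then show ?thesis by (simp add: koszul_contraction_def free_on_zero)
next
  case False
  then have "2 \<le> snd b (pivot b)" using multideg_pivot[OF assms(3)] by (simp add: multideg_def)
  then have "v_to_u (pivot b) b \<in> koszul_basis m K"
    using v_to_u_in_koszul_basis_iff pivot_in_vertices assms by blast
  then show ?thesis using False
    by (auto simp: koszul_contraction_def free_on_iff supp_def delta_def
        elim: finite_subset[of _ "{v_to_u (pivot b) b}"])
qed

lemma lin_ext_koszul_d_basis:
  assumes "finite (fst b)"
  shows "lin_ext g (koszul_d_basis m K b) = (\<lambda>z. \<Sum>j\<in>fst b.
     (if u_to_v j b \<in> koszul_basis m K then koszul_sign j (fst b) else 0) * g (u_to_v j b) z)"
  unfolding koszul_d_basis_eq using assms by (rule lin_ext_sum_delta)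

lemma koszul_homotopy_pivot_in:
  assumes b: "b \<in> koszul_basis m K" "in_R_ideal b" and i: "pivot b \<in> fst b"
  shows "lin_ext koszul_contraction (koszul_d_basis m K b) = delta b"
proof
  fix z
  let ?i = "pivot b" and ?J = "fst b"
  let ?c = "\<lambda>j. if u_to_v j b \<in> koszul_basis m K then koszul_sign j ?J else 0"
  have fin: "finite ?J" using b(1) by (rule finite_koszul_basis_fst)
  have "2 \<le> snd (u_to_v ?i b) ?i"
    using multideg_pivot[OF b(2)] i by (simp add: multideg_def u_to_v_def)
  moreover have "?i \<in> {1..m}" using b(1) i by (auto simp: koszul_basis_def)
  ultimately have "u_to_v ?i b \<in> koszul_basis m K"
    using v_to_u_in_koszul_basis_iff[of "u_to_v ?i b" ?i m K] b(1) i
    by (simp add: v_to_u_u_to_v_cancel)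
  then have c_i: "?c ?i = koszul_sign ?i ?J" by simp
  have contraction_i: "koszul_contraction (u_to_v ?i b) = (\<lambda>x. koszul_sign ?i ?J * delta b x)"
    using i by (simp add: koszul_contraction_def pivot_u_to_v v_to_u_u_to_v_cancel insert_absorb)
  have contraction_j: "koszul_contraction (u_to_v j b) = (\<lambda>_. 0)" if "j \<in> ?J - {?i}" for j
    using that i by (simp add: koszul_contraction_def pivot_u_to_v)
  have "lin_ext koszul_contraction (koszul_d_basis m K b) z
      = (\<Sum>j\<in>?J. ?c j * koszul_contraction (u_to_v j b) z)"
    using fin by (simp add: lin_ext_koszul_d_basis)
  also have "\<dots> = ?c ?i * koszul_contraction (u_to_v ?i b) z"
    using fin i contraction_j by (simp add: sum.remove)
  also have "\<dots> = delta b z"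
    by (simp add: c_i contraction_i mult.assoc[symmetric] koszul_sign_sq)
  finally show "lin_ext koszul_contraction (koszul_d_basis m K b) z = delta b z" .
qed

lemma koszul_homotopy_pivot_notin:
  assumes vertices: "\<forall>\<sigma>\<in>K. \<sigma> \<subseteq> {1..m}"
    and b: "b \<in> koszul_basis m K" "in_R_ideal b" and i: "pivot b \<notin> fst b"
  shows "(\<lambda>z. lin_ext (koszul_d_basis m K) (koszul_contraction b) z
              + lin_ext koszul_contraction (koszul_d_basis m K b) z) = delta b"
proof
  fix z
  let ?i = "pivot b" and ?J = "fst b"
  let ?s = "koszul_sign ?i (insert ?i ?J)"
  let ?inKB = "\<lambda>j. u_to_v j b \<in> koszul_basis m K"
  define F where "F j = v_to_u ?i (u_to_v j b)" for j
  have fin: "finite ?J" using b(1) by (rule finite_koszul_basis_fst)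
  have two: "2 \<le> snd b ?i" using multideg_pivot[OF b(2)] i by (simp add: multideg_def)
  have F_in: "F j \<in> koszul_basis m K \<longleftrightarrow> ?inKB j" if "j \<in> ?J" for j
    using that i two pivot_in_vertices[OF vertices b] unfolding F_def
    by (intro v_to_u_in_koszul_basis_iff) (auto simp: u_to_v_def)
  have "lin_ext (koszul_d_basis m K) (koszul_contraction b) z
      = ?s * koszul_d_basis m K (v_to_u ?i b) z"
    using i by (simp add: koszul_contraction_def lin_ext_scaled_delta)
  also have "koszul_d_basis m K (v_to_u ?i b) z = ?s * delta b z
      + (\<Sum>j\<in>?J. (if ?inKB j then koszul_sign j (insert ?i ?J) else 0) * delta (F j) z)"
  proof -
    let ?b' = "v_to_u ?i b"
    have "koszul_d_basis m K ?b' z = (\<Sum>j\<in>insert ?i ?J.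
        (if u_to_v j ?b' \<in> koszul_basis m K then koszul_sign j (insert ?i ?J) else 0)
        * delta (u_to_v j ?b') z)"
      by (simp add: koszul_d_basis_eq cong: if_cong)
    also have "\<dots> = ?s * delta b z + (\<Sum>j\<in>?J.
        (if u_to_v j ?b' \<in> koszul_basis m K then koszul_sign j (insert ?i ?J) else 0)
        * delta (u_to_v j ?b') z)"
      using fin i two b(1) by (simp add: u_to_v_v_to_u_cancel)
    also have "(\<Sum>j\<in>?J.
        (if u_to_v j ?b' \<in> koszul_basis m K then koszul_sign j (insert ?i ?J) else 0)
        * delta (u_to_v j ?b') z)
      = (\<Sum>j\<in>?J. (if ?inKB j then koszul_sign j (insert ?i ?J) else 0) * delta (F j) z)"
    proof -
      have "u_to_v j ?b' = F j" if "j \<in> ?J" for j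
        using that i u_to_v_v_to_u[of ?i j b] by (auto simp: F_def)
      then show ?thesis using F_in by (intro sum.cong refl) simp
    qed
    finally show ?thesis .
  qed
  finally have d_contraction: "lin_ext (koszul_d_basis m K) (koszul_contraction b) z = delta b z
      + (\<Sum>j\<in>?J. ?s * ((if ?inKB j then koszul_sign j (insert ?i ?J) else 0) * delta (F j) z))"
    by (simp add: distrib_left sum_distrib_left mult.assoc[symmetric] koszul_sign_sq)
  have "koszul_contraction (u_to_v j b) = (\<lambda>x. koszul_sign ?i (insert ?i (?J - {j})) * delta (F j) x)"
    if "j \<in> ?J" for j
    using that i by (simp add: koszul_contraction_def pivot_u_to_v F_def)
  then have contraction_d: "lin_ext koszul_contraction (koszul_d_basis m K b) z
      = (\<Sum>j\<in>?J. (if ?inKB j then koszul_sign j ?J else 0)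
          * (koszul_sign ?i (insert ?i (?J - {j})) * delta (F j) z))"
    using fin by (simp add: lin_ext_koszul_d_basis cong: sum.cong)
  have "(\<Sum>j\<in>?J. ?s * ((if ?inKB j then koszul_sign j (insert ?i ?J) else 0) * delta (F j) z))
      + (\<Sum>j\<in>?J. (if ?inKB j then koszul_sign j ?J else 0)
          * (koszul_sign ?i (insert ?i (?J - {j})) * delta (F j) z)) = 0"
    unfolding sum.distrib[symmetric]
    by (rule sum.neutral) (simp add: mult.assoc[symmetric] koszul_sign_exchange[OF fin i])
  then show "lin_ext (koszul_d_basis m K) (koszul_contraction b) z
      + lin_ext koszul_contraction (koszul_d_basis m K b) z = delta b z"
    unfolding d_contraction contraction_d by simp
qed

lemma koszul_contraction_homotopy:
  assumes "\<forall>\<sigma>\<in>K. \<sigma> \<subseteq> {1..m}" "b \<in> koszul_basis m K" "in_R_ideal b"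
  shows "(\<lambda>z. lin_ext (koszul_d_basis m K) (koszul_contraction b) z
              + lin_ext koszul_contraction (koszul_d_basis m K b) z) = delta b"
proof (cases "pivot b \<in> fst b")
  case True
  then have "koszul_contraction b = (\<lambda>_. 0)" by (simp add: koszul_contraction_def)
  then show ?thesis using koszul_homotopy_pivot_in[OF assms(2,3) True] by (simp add: lin_ext_zero)
next
  case False
  with assms show ?thesis by (rule koszul_homotopy_pivot_notin)
qed

lemma koszul_ideal_acyclic:
  assumes vertices: "\<forall>\<sigma>\<in>K. \<sigma> \<subseteq> {1..m}"
    and n: "n \<in> free_on (koszul_basis m K - R_basis m K)" "koszul_d m K n = (\<lambda>_. 0)"
  shows "n \<in> koszul_d m K ` koszul_complex m K"
proof -
  have ideal: "b \<in> koszul_basis m K" "in_R_ideal b" if "b \<in> koszul_basis m K - R_basis m K" for b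
    using that by (auto simp: R_basis_def)
  have "lin_ext koszul_contraction n \<in> koszul_complex m K"
    unfolding koszul_complex_def using n(1)
    by (rule lin_ext_in_free_on) (use ideal koszul_contraction_in_free_on[OF vertices] in blast)
  moreover have "koszul_d m K (lin_ext koszul_contraction n) = n"
    unfolding koszul_d_def using n[unfolded koszul_d_def]
  proof (rule lin_ext_contracting_homotopy)
    fix b assume "b \<in> koszul_basis m K - R_basis m K"
    note b = ideal[OF this]
    show "finite (supp (koszul_contraction b)) \<and> finite (supp (koszul_d_basis m K b))"
      using koszul_contraction_in_free_on[OF vertices b] koszul_d_basis_in_free_on[OF b(1)]
      by (simp add: free_on_iff)
    show "(\<lambda>x. lin_ext (koszul_d_basis m K) (koszul_contraction b) x
              + lin_ext koszul_contraction (koszul_d_basis m K b) x) = delta b"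
      using vertices b by (rule koszul_contraction_homotopy)
  qed
  ultimately show ?thesis by (metis image_eqI)
qed

theorem lemma4p4:
  fixes m :: nat and K :: "nat set set"
  assumes "simplicial_complex_on m K"
  shows "induces_iso_in_cohomology (koszul_complex m K) (koszul_d m K)
           (R_complex m K) (R_d m K) (rho m K)"
proof -
  have vertices: "\<forall>\<sigma>\<in>K. \<sigma> \<subseteq> {1..m}"
    using assms by (simp add: simplicial_complex_on_def)
  interpret split_based_complex "koszul_basis m K" "R_basis m K" "koszul_d_basis m K"
    by (rule koszul_split_based_complex)
  have rho: "rho m K = proj_on (R_basis m K)"
    by (simp add: rho_def proj_on_def fun_eq_iff)
  have R_d: "R_d m K = (\<lambda>c. proj_on (R_basis m K) (koszul_d m K c))"
    by (simp add: R_d_def rho fun_eq_iff)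
  have "induces_iso_in_cohomology C d R (\<lambda>c. p (d c)) p"
    using koszul_ideal_acyclic[OF vertices]
    by (intro proj_induces_iso_in_cohomology) (simp add: koszul_complex_def koszul_d_def)
  then show ?thesis
    by (simp add: rho R_d koszul_complex_def R_complex_def koszul_d_def)
qed


end
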